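(* Let $h$ be a hauptmodul for a genus zero modular group $\Gamma$ and $t$ a hauptmodul for a genus zero modular group $\Gamma'$, and let $n$ be a positive integer. Suppose $h(\tau)$ and $h(n\tau)$ can both be expressed as rational functions of $t$, say $h(\tau) = h_1(t(\tau))$ and $h(n\tau) = h_2(t(\tau))$. Then $$h_1'(t)^2\, Q_\Gamma(h_1(t)) + \tfrac{1}{2}\{h_1(t),t\} \;=\; h_2'(t)^2\, Q_\Gamma(h_2(t)) + \tfrac{1}{2}\{h_2(t),t\} \;=\; Q_{\Gamma'}(t).$$
   Context: A genus zero modular group $\Gamma$ is a discrete subgroup of $\mathrm{PSL}(2,\mathbb{R})$ acting on the upper half plane $\mathbb{H}$ (commensurable with $\mathrm{PSL}(2,\mathbb{Z})$) whose compactified quotient $\Gamma\backslash\mathbb{H}$ has genus $0$; a hauptmodul for $\Gamma$ is a $\Gamma$-invariant meromorphic function on $\mathbb{H}$ generating the function field of this genus zero curve. For such a hauptmodul $h$, the "Q-value" $Q_\Gamma$ is the rational function such that $h$ satisfies the Schwarzian differential equation $$h'(\tau)^2\, Q_\Gamma(h(\tau)) + \tfrac{1}{2}\{h(\tau),\tau\} = 0,$$ where $\{f(x),x\} = \frac{2 f'(x) f'''(x) - 3 f''(x)^2}{2 f'(x)^2}$ denotes the Schwarzian derivative. $Q_{\Gamma'}$ is defined in the same way for the hauptmodul $t$ of $\Gamma'$. *)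

theory Defs
  imports "HOL-Complex_Analysis.Complex_Analysis" "HOL-Computational_Algebra.Polynomial"
begin

definition upper_half :: "complex set" where
  "upper_half = {z. 0 < Im z}"

definition schwarzian :: "(complex \<Rightarrow> complex) \<Rightarrow> complex \<Rightarrow> complex" where
  "schwarzian f x =
     (2 * deriv f x * (deriv ^^ 3) f x - 3 * ((deriv ^^ 2) f x)^2) / (2 * (deriv f x)^2)"

definition rat_fun :: "complex poly \<Rightarrow> complex poly \<Rightarrow> complex \<Rightarrow> complex" where
  "rat_fun p q z = poly p z / poly q z"

definition is_Q_value :: "(complex \<Rightarrow> complex) \<Rightarrow> complex poly \<Rightarrow> complex poly \<Rightarrow> bool" where
  "is_Q_value h a b \<longleftrightarrow> b \<noteq> 0 \<and>
     (\<forall>\<tau>\<in>upper_half. h analytic_on {\<tau>} \<and> deriv h \<tau> \<noteq> 0 \<and> poly b (h \<tau>) \<noteq> 0 \<longrightarrow>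
        (deriv h \<tau>)^2 * rat_fun a b (h \<tau>) + schwarzian h \<tau> / 2 = 0)"

text \<open>The analytic properties of a hauptmodul used here: a nonconstant meromorphic
  function on the upper half plane.\<close>
definition nonconst_meromorphic_H :: "(complex \<Rightarrow> complex) \<Rightarrow> bool" where
  "nonconst_meromorphic_H h \<longleftrightarrow> h meromorphic_on upper_half \<and>
     (\<exists>\<tau>1\<in>upper_half. \<exists>\<tau>2\<in>upper_half.
        h analytic_on {\<tau>1} \<and> h analytic_on {\<tau>2} \<and> h \<tau>1 \<noteq> h \<tau>2)"

end

theory Submission
  imports Defs
begin

text \<open>Near a point where \<open>t' \<noteq> 0\<close> and \<open>h = h\<^sub>1 \<circ> t\<close>, the chain rule
  \<open>{R \<circ> t, \<tau>} = {R, t} t'\<^sup>2 + {t, \<tau>}\<close> turns the Schwarzian equation of \<open>h\<close> into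
  \<open>t'\<^sup>2 (h\<^sub>1'\<^sup>2 Q\<^sub>\<Gamma>(h\<^sub>1) + {h\<^sub>1, t}/2) = -{t, \<tau>}/2\<close>, and the Schwarzian equation of
  \<open>t\<close> identifies the right-hand side with \<open>t'\<^sup>2 Q\<^sub>\<Gamma>\<^sub>'(t)\<close>. The same argument applies to
  \<open>h(n\<tau>) = h\<^sub>2(t)\<close>, because a Schwarzian scales by \<open>n\<^sup>2\<close> under the dilation
  \<open>\<tau> \<mapsto> n\<tau>\<close>, so \<open>\<tau> \<mapsto> h(n\<tau>)\<close> has the same Q-value as \<open>h\<close>. This proves the identity
  on the \<open>t\<close>-image of a small open set; both sides are rational in \<open>t\<close>, so the
  identity theorem extends it to every point where they are defined.\<close>

definition schwarzian_form :: "(complex \<Rightarrow> complex) \<Rightarrow> (complex \<Rightarrow> complex) \<Rightarrow> complex \<Rightarrow> complex" where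
  "schwarzian_form Q f z = (deriv f z)^2 * Q (f z) + schwarzian f z / 2"

lemma higher_derivs_compose:
  fixes g t R :: "complex \<Rightarrow> complex"
  assumes N: "open N" "\<tau> \<in> N" and Om: "open Om" and ht: "t holomorphic_on N"
    and hR: "R holomorphic_on Om" and sub: "t ` N \<subseteq> Om" and eq: "\<forall>x\<in>N. g x = R (t x)"
  shows "deriv g \<tau> = deriv R (t \<tau>) * deriv t \<tau>"
    and "(deriv^^2) g \<tau> = (deriv^^2) R (t \<tau>) * (deriv t \<tau>)^2 + deriv R (t \<tau>) * (deriv^^2) t \<tau>"
    and "(deriv^^3) g \<tau> = (deriv^^3) R (t \<tau>) * (deriv t \<tau>)^3
        + 3 * (deriv^^2) R (t \<tau>) * deriv t \<tau> * (deriv^^2) t \<tau> + deriv R (t \<tau>) * (deriv^^3) t \<tau>"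
proof -
  define t1 where "t1 = deriv t" define t2 where "t2 = deriv t1" define t3 where "t3 = deriv t2"
  define R1 where "R1 = deriv R" define R2 where "R2 = deriv R1" define R3 where "R3 = deriv R2"
  have ht1: "t1 holomorphic_on N" unfolding t1_def using ht N(1) by (rule holomorphic_deriv)
  have ht2: "t2 holomorphic_on N" unfolding t2_def using ht1 N(1) by (rule holomorphic_deriv)
  have hR1: "R1 holomorphic_on Om" unfolding R1_def using hR Om by (rule holomorphic_deriv)
  have hR2: "R2 holomorphic_on Om" unfolding R2_def using hR1 Om by (rule holomorphic_deriv)
  have dt: "(t has_field_derivative t1 x) (at x)" "(t1 has_field_derivative t2 x) (at x)"
    "(t2 has_field_derivative t3 x) (at x)" if "x \<in> N" for x
    using holomorphic_derivI[OF ht N(1) that] holomorphic_derivI[OF ht1 N(1) that]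
      holomorphic_derivI[OF ht2 N(1) that] by (auto simp: t1_def t2_def t3_def)
  have dR: "(R has_field_derivative R1 (t x)) (at (t x))" "(R1 has_field_derivative R2 (t x)) (at (t x))"
    "(R2 has_field_derivative R3 (t x)) (at (t x))" if "x \<in> N" for x
  proof -
    have "t x \<in> Om" using sub that by blast
    then show "(R has_field_derivative R1 (t x)) (at (t x))" "(R1 has_field_derivative R2 (t x)) (at (t x))"
      "(R2 has_field_derivative R3 (t x)) (at (t x))"
      using holomorphic_derivI[OF hR Om] holomorphic_derivI[OF hR1 Om] holomorphic_derivI[OF hR2 Om]
      by (simp_all add: R1_def R2_def R3_def)
  qed
  have deriv_eq: "deriv f1 x = deriv f2 x" if "x \<in> N" "\<forall>y\<in>N. f1 y = f2 y" for f1 f2 x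
    by (rule deriv_cong_ev) (use that eventually_mono[OF eventually_nhds_in_open[OF N(1) that(1)]] in auto)
  define D1 where "D1 x = R1 (t x) * t1 x" for x
  define D2 where "D2 x = R2 (t x) * t1 x * t1 x + R1 (t x) * t2 x" for x
  define D3 where "D3 x = R3 (t x) * t1 x * t1 x * t1 x + 3 * R2 (t x) * t1 x * t2 x + R1 (t x) * t3 x" for x
  have e1: "deriv g x = D1 x" if "x \<in> N" for x
  proof -
    have "deriv g x = deriv (\<lambda>x. R (t x)) x" by (rule deriv_eq[OF that]) (use eq in simp)
    also have "\<dots> = D1 x" unfolding D1_def
      by (rule DERIV_imp_deriv, rule DERIV_chain2[OF dR(1)[OF that] dt(1)[OF that]])
    finally show ?thesis .
  qed
  have e2: "deriv (deriv g) x = D2 x" if "x \<in> N" for x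
  proof -
    have "deriv (deriv g) x = deriv D1 x" by (rule deriv_eq[OF that]) (use e1 in simp)
    also have "\<dots> = D2 x" unfolding D1_def D2_def
      by (rule DERIV_imp_deriv)
        (rule derivative_eq_intros DERIV_chain2[OF dR(2)[OF that] dt(1)[OF that]] dt[OF that] | simp)+
    finally show ?thesis .
  qed
  have e3: "deriv (deriv (deriv g)) x = D3 x" if "x \<in> N" for x
  proof -
    have "deriv (deriv (deriv g)) x = deriv D2 x" by (rule deriv_eq[OF that]) (use e2 in simp)
    also have "\<dots> = D3 x" unfolding D3_def D2_def
      by (rule DERIV_imp_deriv)
        ((rule derivative_eq_intros DERIV_chain2[OF dR(3)[OF that] dt(1)[OF that]]
          DERIV_chain2[OF dR(2)[OF that] dt(1)[OF that]] dt[OF that] | simp)+,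
         simp add: algebra_simps)
    finally show ?thesis .
  qed
  show "deriv g \<tau> = deriv R (t \<tau>) * deriv t \<tau>"
    and "(deriv^^2) g \<tau> = (deriv^^2) R (t \<tau>) * (deriv t \<tau>)^2 + deriv R (t \<tau>) * (deriv^^2) t \<tau>"
    and "(deriv^^3) g \<tau> = (deriv^^3) R (t \<tau>) * (deriv t \<tau>)^3
        + 3 * (deriv^^2) R (t \<tau>) * deriv t \<tau> * (deriv^^2) t \<tau> + deriv R (t \<tau>) * (deriv^^3) t \<tau>"
    using e1[OF N(2)] e2[OF N(2)] e3[OF N(2)]
    by (simp_all add: numeral_eq_Suc D1_def D2_def D3_def t1_def t2_def t3_def R1_def R2_def R3_def
        power2_eq_square power3_eq_cube algebra_simps)
qed

lemma schwarzian_compose: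
  fixes g t R :: "complex \<Rightarrow> complex"
  assumes "open N" "\<tau> \<in> N" "open Om" "t holomorphic_on N"
    and "R holomorphic_on Om" "t ` N \<subseteq> Om" "\<forall>x\<in>N. g x = R (t x)"
    and "deriv t \<tau> \<noteq> 0" "deriv R (t \<tau>) \<noteq> 0"
  shows "schwarzian g \<tau> = schwarzian R (t \<tau>) * (deriv t \<tau>)^2 + schwarzian t \<tau>"
proof -
  have algebra: "(2 * (a * t1) * (c * t1^3 + 3 * b * t1 * t2 + a * t3) - 3 * (b * t1^2 + a * t2)^2)
           / (2 * (a * t1)^2)
         = (2 * a * c - 3 * b^2) / (2 * a^2) * t1^2 + (2 * t1 * t3 - 3 * t2^2) / (2 * t1^2)"
    if "a \<noteq> 0" "t1 \<noteq> 0" for a b c t1 t2 t3 :: complex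
    using that by (simp add: field_simps) algebra
  show ?thesis
    using algebra[OF assms(9,8)] higher_derivs_compose[OF assms(1-7)]
    by (simp add: schwarzian_def)
qed

lemma schwarzian_form_compose:
  fixes g t R Q :: "complex \<Rightarrow> complex"
  assumes "open N" "\<tau> \<in> N" "open Om" "t holomorphic_on N"
    and "R holomorphic_on Om" "t ` N \<subseteq> Om" "\<forall>x\<in>N. g x = R (t x)"
    and "deriv t \<tau> \<noteq> 0" "deriv R (t \<tau>) \<noteq> 0"
  shows "schwarzian_form Q g \<tau> = (deriv t \<tau>)^2 * schwarzian_form Q R (t \<tau>) + schwarzian t \<tau> / 2"
  using schwarzian_compose[OF assms] higher_derivs_compose(1)[OF assms(1-7)] assms(2,7)
  by (simp add: schwarzian_form_def algebra_simps power_mult_distrib)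

lemma schwarzian_form_dilate:
  fixes f Q :: "complex \<Rightarrow> complex"
  assumes "open T" "f holomorphic_on T" "c * \<tau> \<in> T"
  shows "deriv (\<lambda>w. f (c * w)) \<tau> = c * deriv f (c * \<tau>)"
    and "schwarzian_form Q (\<lambda>w. f (c * w)) \<tau> = c^2 * schwarzian_form Q f (c * \<tau>)"
proof -
  have "open {w. c * w \<in> T}"
    using open_vimage[OF assms(1), of "\<lambda>w. c * w"] by (simp add: vimage_def continuous_intros)
  then have k: "(deriv ^^ k) (\<lambda>w. f (c * w)) \<tau> = c^k * (deriv ^^ k) f (c * \<tau>)" for k
    by (rule higher_deriv_compose_linear[OF assms(2) _ assms(1)]) (use assms(3) in auto)
  show "deriv (\<lambda>w. f (c * w)) \<tau> = c * deriv f (c * \<tau>)" using k[of 1] by simp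
  show "schwarzian_form Q (\<lambda>w. f (c * w)) \<tau> = c^2 * schwarzian_form Q f (c * \<tau>)"
  proof (cases "c = 0 \<or> deriv f (c * \<tau>) = 0")
    case True
    then show ?thesis using k[of 1] k[of 2] k[of 3]
      by (auto simp: schwarzian_form_def schwarzian_def numeral_eq_Suc)
  next
    case False
    have algebra: "(2 * (c * d1) * (c^3 * d3) - 3 * (c^2 * d2)^2) / (2 * (c * d1)^2)
        = c^2 * ((2 * d1 * d3 - 3 * d2^2) / (2 * d1^2))" if "d1 \<noteq> 0" for d1 d2 d3
      using that False by (simp add: field_simps) algebra
    have "schwarzian (\<lambda>w. f (c * w)) \<tau> = c^2 * schwarzian f (c * \<tau>)"
      using algebra False k[of 1] k[of 2] k[of 3] by (simp add: schwarzian_def)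
    then show ?thesis
      using k[of 1] by (simp add: schwarzian_form_def power_mult_distrib algebra_simps)
  qed
qed

lemma analytic_at_dilate_iff:
  fixes f :: "complex \<Rightarrow> complex"
  assumes "c \<noteq> 0"
  shows "(\<lambda>w. f (c * w)) analytic_on {z} \<longleftrightarrow> f analytic_on {c * z}"
proof
  assume "(\<lambda>w. f (c * w)) analytic_on {z}"
  moreover have "(\<lambda>w. w / c) analytic_on {c * z}" by (intro analytic_intros) (use assms in auto)
  ultimately have "(\<lambda>w. f (c * (w / c))) analytic_on {c * z}"
    using analytic_on_compose_gen[of "\<lambda>w. w / c" "{c * z}" "\<lambda>w. f (c * w)" "{z}"] assms
    by (auto simp: o_def)
  then show "f analytic_on {c * z}" using assms by simp
next
  assume "f analytic_on {c * z}"
  then show "(\<lambda>w. f (c * w)) analytic_on {z}"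
    using analytic_on_compose_gen[of "\<lambda>w. c * w" "{z}" f "{c * z}"]
    by (auto simp: o_def intro: analytic_intros)
qed

lemma is_Q_value_schwarzian_form:
  assumes "is_Q_value h a b" "\<tau> \<in> upper_half" "h analytic_on {\<tau>}" "deriv h \<tau> \<noteq> 0" "poly b (h \<tau>) \<noteq> 0"
  shows "schwarzian_form (rat_fun a b) h \<tau> = 0"
  using assms by (simp add: is_Q_value_def schwarzian_form_def)

lemma Q_value_dilate:
  assumes "is_Q_value h a b" "n > 0"
  shows "is_Q_value (\<lambda>w. h (of_nat n * w)) a b"
  unfolding is_Q_value_def
proof (intro conjI ballI impI)
  show "b \<noteq> 0" using assms(1) by (simp add: is_Q_value_def)
  fix \<tau> assume \<tau>: "\<tau> \<in> upper_half"
  define c :: complex where "c = of_nat n"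
  assume "(\<lambda>w. h (of_nat n * w)) analytic_on {\<tau>} \<and> deriv (\<lambda>w. h (of_nat n * w)) \<tau> \<noteq> 0
      \<and> poly b (h (of_nat n * \<tau>)) \<noteq> 0"
  then have an: "h analytic_on {c * \<tau>}" and d: "deriv (\<lambda>w. h (c * w)) \<tau> \<noteq> 0"
    and pb: "poly b (h (c * \<tau>)) \<noteq> 0"
    using analytic_at_dilate_iff[of c h \<tau>] assms(2) by (auto simp: c_def)
  obtain e where "e > 0" and hol: "h holomorphic_on ball (c * \<tau>) e"
    using an by (auto simp: analytic_on_def)
  note dil = schwarzian_form_dilate(1)[OF open_ball hol]
    schwarzian_form_dilate(2)[OF open_ball hol, where Q = "rat_fun a b"]
  have "c * \<tau> \<in> upper_half" using \<tau> assms(2) by (simp add: c_def upper_half_def)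
  moreover have "deriv h (c * \<tau>) \<noteq> 0" using d dil(1) \<open>e > 0\<close> by simp
  ultimately have "schwarzian_form (rat_fun a b) h (c * \<tau>) = 0"
    by (rule is_Q_value_schwarzian_form[OF assms(1) _ an _ pb])
  then show "(deriv (\<lambda>w. h (of_nat n * w)) \<tau>)\<^sup>2 * rat_fun a b (h (of_nat n * \<tau>))
      + schwarzian (\<lambda>w. h (of_nat n * w)) \<tau> / 2 = 0"
    using dil(2) \<open>e > 0\<close> by (simp add: schwarzian_form_def c_def)
qed

lemma rat_fun_holomorphic: "rat_fun p q holomorphic_on {y. poly q y \<noteq> 0}"
  unfolding rat_fun_def by (intro holomorphic_intros poly_holomorphic_on) auto

lemma deriv_rat_fun:
  assumes "poly q y \<noteq> 0"
  shows "deriv (rat_fun p q) y = poly (pderiv p * q - p * pderiv q) y / (poly q y)^2"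
proof -
  have "rat_fun p q = (\<lambda>y. poly p y / poly q y)" by (rule ext) (simp add: rat_fun_def)
  moreover have "((\<lambda>y. poly p y / poly q y) has_field_derivative
     (poly (pderiv p) y * poly q y - poly p y * poly (pderiv q) y) / (poly q y * poly q y)) (at y)"
    by (rule derivative_eq_intros poly_DERIV refl | use assms in simp)+
  ultimately show ?thesis by (simp add: DERIV_imp_deriv power2_eq_square)
qed

lemma finite_rat_fun_degenerate_points:
  fixes p q b :: "complex poly"
  assumes "q \<noteq> 0" "b \<noteq> 0" "poly q z \<noteq> 0" "deriv (rat_fun p q) z \<noteq> 0"
  shows "finite {y. poly q y = 0 \<or> deriv (rat_fun p q) y = 0 \<or> poly b (rat_fun p q y) = 0}"
proof -
  define P where "P = pderiv p * q - p * pderiv q"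
  have deriv_eq: "deriv (rat_fun p q) y = poly P y / (poly q y)^2" if "poly q y \<noteq> 0" for y
    using deriv_rat_fun[OF that] by (simp add: P_def)
  have P: "P \<noteq> 0" using assms(3,4) deriv_eq by auto
  \<comment> \<open>\<open>p/q\<close> takes a root \<open>c\<close> of \<open>b\<close> only at roots of \<open>p - c q\<close>, which is nonzero as \<open>p/q\<close> is nonconstant\<close>
  have fibre: "p - smult c q \<noteq> 0" for c
  proof
    assume "p - smult c q = 0"
    then have "P = 0" by (simp add: P_def pderiv_smult mult.commute)
    then show False using P by simp
  qed
  have "{y. poly q y = 0 \<or> deriv (rat_fun p q) y = 0 \<or> poly b (rat_fun p q y) = 0}
      \<subseteq> {y. poly q y = 0} \<union> {y. poly P y = 0}
        \<union> (\<Union>c\<in>{c. poly b c = 0}. {y. poly (p - smult c q) y = 0})"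
  proof
    fix y assume y: "y \<in> {y. poly q y = 0 \<or> deriv (rat_fun p q) y = 0 \<or> poly b (rat_fun p q y) = 0}"
    show "y \<in> {y. poly q y = 0} \<union> {y. poly P y = 0}
        \<union> (\<Union>c\<in>{c. poly b c = 0}. {y. poly (p - smult c q) y = 0})"
    proof (cases "poly q y = 0 \<or> poly P y = 0")
      case True
      then show ?thesis by auto
    next
      case False
      then have "poly b (rat_fun p q y) = 0" using y deriv_eq by auto
      moreover have "poly (p - smult (rat_fun p q y) q) y = 0" using False by (simp add: rat_fun_def)
      ultimately show ?thesis by blast
    qed
  qed
  moreover have "finite ({y. poly q y = 0} \<union> {y. poly P y = 0}
        \<union> (\<Union>c\<in>{c. poly b c = 0}. {y. poly (p - smult c q) y = 0}))"
    using poly_roots_finite[OF assms(1)] poly_roots_finite[OF P] poly_roots_finite[OF assms(2)]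
      poly_roots_finite[OF fibre] by auto
  ultimately show ?thesis by (rule finite_subset)
qed

lemma schwarzian_form_holomorphic:
  assumes "open S" "R holomorphic_on S" "\<forall>y\<in>S. deriv R y \<noteq> 0 \<and> poly b (R y) \<noteq> 0"
  shows "schwarzian_form (rat_fun a b) R holomorphic_on S"
proof -
  have hk: "(deriv^^k) R holomorphic_on S" for k
    using holomorphic_higher_deriv[OF assms(2,1)] .
  have eq: "schwarzian_form (rat_fun a b) R = (\<lambda>y. (deriv R y)^2 * (poly a (R y) / poly b (R y)) +
      (2 * deriv R y * (deriv^^3) R y - 3 * ((deriv^^2) R y)^2) / (2 * (deriv R y)^2) / 2)"
    by (simp add: fun_eq_iff schwarzian_form_def schwarzian_def rat_fun_def)
  show ?thesis unfolding eq
    using hk[of 0] hk[of 1] assms(1,3) by (intro holomorphic_intros poly_holomorphic_on hk) auto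
qed

lemma open_connected_cofinite:
  fixes S :: "complex set"
  assumes "finite (- S)"
  shows "open S" and "connected S"
proof -
  show "open S" using finite_imp_closed[OF assms] by (simp add: closed_def)
  have "connected (UNIV - (- S))"
    by (rule connected_open_diff_countable) (auto simp: countable_finite[OF assms])
  then show "connected S" by (simp add: Diff_eq)
qed

lemma open_analytic_points: "open {z. f analytic_on {z}}"
proof (rule openI)
  fix z assume "z \<in> {z. f analytic_on {z}}"
  then obtain e where "e > 0" "f holomorphic_on ball z e" by (auto simp: analytic_on_def)
  then have "f analytic_on ball z e" by (simp add: analytic_on_open)
  then have "ball z e \<subseteq> {z. f analytic_on {z}}" using analytic_on_subset by blast
  then show "\<exists>e>0. ball z e \<subseteq> {z. f analytic_on {z}}" using \<open>e > 0\<close> by blast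
qed

lemma open_image_deriv_nonzero:
  assumes "f holomorphic_on S" "open S" "open U" "U \<subseteq> S" "\<forall>x\<in>S. deriv f x \<noteq> 0"
  shows "open (f ` U)"
proof (rule open_mapping_thm2[OF assms(1-4)])
  fix X assume X: "open X" "X \<subseteq> S" "X \<noteq> {}"
  show "\<not> f constant_on X"
  proof
    assume "f constant_on X"
    then obtain c where c: "\<forall>x\<in>X. f x = c" by (auto simp: constant_on_def)
    obtain x where "x \<in> X" using X(3) by blast
    then have "deriv f x = deriv (\<lambda>_. c) x"
      by (intro deriv_cong_ev) (use c eventually_mono[OF eventually_nhds_in_open[OF X(1) \<open>x \<in> X\<close>]] in auto)
    then show False using assms(5) X(2) \<open>x \<in> X\<close> by auto
  qed
qed

lemma meromorphic_nonconstant_deriv_nonzero_ball: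
  assumes D: "open D" "connected D" and mero: "f meromorphic_on D"
    and z: "z1 \<in> D" "z2 \<in> D" "f analytic_on {z1}" "f analytic_on {z2}" "f z1 \<noteq> f z2"
  obtains c r where "r > 0" "ball c r \<subseteq> D" "f holomorphic_on ball c r" "\<forall>x\<in>ball c r. deriv f x \<noteq> 0"
proof -
  define Om where "Om = D - {w\<in>D. \<not> f analytic_on {w}}"
  have sparse: "{w\<in>D. \<not> f analytic_on {w}} sparse_in D"
    by (rule meromorphic_on_imp_sparse_singularities'[OF mero])
  have Om: "open Om" "connected Om"
    unfolding Om_def using open_diff_sparse_pts[OF D(1) sparse] sparse_imp_connected[OF _ D(2,1) sparse]
    by simp_all
  have holo: "f holomorphic_on Om"
    by (rule analytic_imp_holomorphic, subst analytic_on_analytic_at) (auto simp: Om_def)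
  obtain c where c: "c \<in> Om" "deriv f c \<noteq> 0"
  proof (rule ccontr)
    assume "\<not> thesis"
    with that have "\<forall>x\<in>Om - {}. (f has_field_derivative 0) (at x)"
      using holomorphic_derivI[OF holo Om(1)] by force
    then obtain k where "\<And>x. x \<in> Om \<Longrightarrow> f x = k"
      using DERIV_zero_connected_constant[OF Om(2,1) finite.emptyI holomorphic_on_imp_continuous_on[OF holo]]
      by blast
    moreover have "z1 \<in> Om" "z2 \<in> Om" using z by (auto simp: Om_def)
    ultimately show False using z(5) by auto
  qed
  have "continuous_on Om (deriv f)"
    by (rule holomorphic_on_imp_continuous_on, rule holomorphic_deriv[OF holo Om(1)])
  from continuous_on_open_avoid[OF this Om(1) c]
  obtain e where e: "e > 0" "\<forall>y. dist c y < e \<longrightarrow> deriv f y \<noteq> 0" by blast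
  obtain r0 where r0: "r0 > 0" "ball c r0 \<subseteq> Om" using Om(1) c(1) open_contains_ball by blast
  show thesis
  proof (rule that[of "min e r0" c])
    have "ball c (min e r0) \<subseteq> Om" using r0 by auto
    then show "ball c (min e r0) \<subseteq> D" "f holomorphic_on ball c (min e r0)"
      using holo holomorphic_on_subset by (auto simp: Om_def)
  qed (use e r0 in auto)
qed

lemma upper_half_open_connected: "open upper_half" "connected upper_half"
  unfolding upper_half_def
  by (simp_all add: open_halfspace_Im_gt convex_connected convex_halfspace_Im_gt)

lemma exists_open_subset_analytic_deriv_nonzero:
  assumes t: "nonconst_meromorphic_H t" and g: "g meromorphic_on upper_half"
  obtains G where "open G" "G \<noteq> {}" "G \<subseteq> upper_half"
    "\<forall>x\<in>G. t analytic_on {x} \<and> g analytic_on {x} \<and> deriv t x \<noteq> 0"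
proof -
  obtain c r where r: "r > 0" "ball c r \<subseteq> upper_half" "t holomorphic_on ball c r"
    "\<forall>x\<in>ball c r. deriv t x \<noteq> 0"
  proof -
    from t obtain z1 z2 where z: "z1 \<in> upper_half" "z2 \<in> upper_half" "t analytic_on {z1}"
      "t analytic_on {z2}" "t z1 \<noteq> t z2" and mero: "t meromorphic_on upper_half"
      by (auto simp: nonconst_meromorphic_H_def)
    show thesis
      by (rule meromorphic_nonconstant_deriv_nonzero_ball[OF upper_half_open_connected mero z that])
  qed
  define G where "G = ball c r \<inter> {x. g analytic_on {x}}"
  have "countable (upper_half \<inter> {w\<in>upper_half. \<not> g analytic_on {w}})"
    by (intro sparse_imp_countable upper_half_open_connected meromorphic_on_imp_sparse_singularities' g)
  then have "countable (ball c r - G)"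
    by (rule countable_subset[rotated]) (use r(2) in \<open>auto simp: G_def\<close>)
  then have "G \<noteq> {}" using uncountable_ball[OF r(1), of c] by auto
  moreover have "open G" unfolding G_def by (intro open_Int open_ball open_analytic_points)
  moreover have "G \<subseteq> upper_half" using r(2) by (auto simp: G_def)
  moreover have "\<forall>x\<in>G. t analytic_on {x} \<and> g analytic_on {x} \<and> deriv t x \<noteq> 0"
    using r(3,4) analytic_on_subset[of t "ball c r"] by (auto simp: G_def analytic_on_open)
  ultimately show thesis using that by blast
qed

lemma schwarzian_form_rat_fun_eq_Q_value_at:
  fixes g t :: "complex \<Rightarrow> complex"
  assumes QG: "is_Q_value g qa qb" and QG': "is_Q_value t qa' qb'"
    and G: "open G" "G \<subseteq> upper_half" "\<forall>x\<in>G. t analytic_on {x} \<and> g analytic_on {x} \<and> deriv t x \<noteq> 0"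
    and rel: "\<forall>\<tau>\<in>upper_half. g analytic_on {\<tau>} \<and> t analytic_on {\<tau>} \<and> poly q (t \<tau>) \<noteq> 0
               \<longrightarrow> g \<tau> = rat_fun p q (t \<tau>)"
    and \<tau>: "\<tau> \<in> G" "poly q (t \<tau>) \<noteq> 0" "deriv (rat_fun p q) (t \<tau>) \<noteq> 0"
      "poly qb (rat_fun p q (t \<tau>)) \<noteq> 0" "poly qb' (t \<tau>) \<noteq> 0"
  shows "schwarzian_form (rat_fun qa qb) (rat_fun p q) (t \<tau>) = rat_fun qa' qb' (t \<tau>)"
proof -
  define N where "N = G \<inter> t -` {y. poly q y \<noteq> 0}"
  have \<tau>G: "\<tau> \<in> upper_half" "t analytic_on {\<tau>}" "g analytic_on {\<tau>}" "deriv t \<tau> \<noteq> 0"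
    using G(2,3) \<tau>(1) by auto
  have tG: "t holomorphic_on G"
    by (rule analytic_imp_holomorphic, subst analytic_on_analytic_at) (use G(3) in blast)
  have Om: "open {y. poly q y \<noteq> 0}" by (intro open_Collect_neq continuous_intros)
  have N: "open N" unfolding N_def
    by (rule continuous_open_preimage[OF holomorphic_on_imp_continuous_on[OF tG] G(1) Om])
  have \<tau>N: "\<tau> \<in> N" using \<tau>(1,2) by (simp add: N_def)
  have tN: "t holomorphic_on N" using tG by (rule holomorphic_on_subset) (auto simp: N_def)
  have sub: "t ` N \<subseteq> {y. poly q y \<noteq> 0}" by (auto simp: N_def)
  have eq: "\<forall>x\<in>N. g x = rat_fun p q (t x)"
  proof
    fix x assume "x \<in> N"
    then have "x \<in> upper_half" "g analytic_on {x}" "t analytic_on {x}" "poly q (t x) \<noteq> 0"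
      using G(2,3) by (auto simp: N_def)
    then show "g x = rat_fun p q (t x)" using rel by blast
  qed
  note comp = N \<tau>N Om tN rat_fun_holomorphic sub eq
  have "deriv g \<tau> \<noteq> 0" using higher_derivs_compose(1)[OF comp] \<tau>G(4) \<tau>(3) by simp
  moreover have "g \<tau> = rat_fun p q (t \<tau>)" using eq \<tau>N by blast
  ultimately have "schwarzian_form (rat_fun qa qb) g \<tau> = 0"
    using is_Q_value_schwarzian_form[OF QG \<tau>G(1,3)] \<tau>(4) by simp
  then have "(deriv t \<tau>)^2 * schwarzian_form (rat_fun qa qb) (rat_fun p q) (t \<tau>) + schwarzian t \<tau> / 2 = 0"
    using schwarzian_form_compose[OF comp \<tau>G(4) \<tau>(3)] by simp
  moreover have "(deriv t \<tau>)^2 * rat_fun qa' qb' (t \<tau>) + schwarzian t \<tau> / 2 = 0"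
    using is_Q_value_schwarzian_form[OF QG' \<tau>G(1,2,4) \<tau>(5)] by (simp add: schwarzian_form_def)
  ultimately have "(deriv t \<tau>)^2 * schwarzian_form (rat_fun qa qb) (rat_fun p q) (t \<tau>)
      = (deriv t \<tau>)^2 * rat_fun qa' qb' (t \<tau>)"
    by (simp add: eq_neg_iff_add_eq_0[symmetric])
  then show ?thesis using \<tau>G(4) by simp
qed

lemma schwarzian_form_rat_fun_eq_Q_value:
  fixes g t :: "complex \<Rightarrow> complex"
  assumes t: "nonconst_meromorphic_H t" and g: "g meromorphic_on upper_half"
    and QG: "is_Q_value g qa qb" and QG': "is_Q_value t qa' qb'" and q: "q \<noteq> 0"
    and rel: "\<forall>\<tau>\<in>upper_half. g analytic_on {\<tau>} \<and> t analytic_on {\<tau>} \<and> poly q (t \<tau>) \<noteq> 0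
               \<longrightarrow> g \<tau> = rat_fun p q (t \<tau>)"
    and z: "poly q z \<noteq> 0" "deriv (rat_fun p q) z \<noteq> 0" "poly qb (rat_fun p q z) \<noteq> 0" "poly qb' z \<noteq> 0"
  shows "schwarzian_form (rat_fun qa qb) (rat_fun p q) z = rat_fun qa' qb' z"
proof -
  define S where "S = {y. poly q y \<noteq> 0 \<and> deriv (rat_fun p q) y \<noteq> 0
    \<and> poly qb (rat_fun p q y) \<noteq> 0 \<and> poly qb' y \<noteq> 0}"
  have "qb \<noteq> 0" "qb' \<noteq> 0" using QG QG' by (simp_all add: is_Q_value_def)
  then have "finite ({y. poly q y = 0 \<or> deriv (rat_fun p q) y = 0 \<or> poly qb (rat_fun p q y) = 0}
      \<union> {y. poly qb' y = 0})"
    using finite_rat_fun_degenerate_points[OF q _ z(1,2)] poly_roots_finite by blast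
  moreover have "- S \<subseteq> {y. poly q y = 0 \<or> deriv (rat_fun p q) y = 0 \<or> poly qb (rat_fun p q y) = 0}
      \<union> {y. poly qb' y = 0}" by (auto simp: S_def)
  ultimately have cofinite: "finite (- S)" by (rule finite_subset[rotated])
  note S = open_connected_cofinite[OF cofinite]
  obtain G where G: "open G" "G \<noteq> {}" "G \<subseteq> upper_half"
    "\<forall>x\<in>G. t analytic_on {x} \<and> g analytic_on {x} \<and> deriv t x \<noteq> 0"
    using exists_open_subset_analytic_deriv_nonzero[OF t g] by blast
  have tG: "t holomorphic_on G"
    by (rule analytic_imp_holomorphic, subst analytic_on_analytic_at) (use G(4) in blast)
  have "open (t ` G)" using open_image_deriv_nonzero[OF tG G(1) G(1) order_refl] G(4) by blast
  define W where "W = t ` G \<inter> S"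
  have W: "open W" "W \<subseteq> S" using \<open>open (t ` G)\<close> S(1) by (auto simp: W_def)
  have "W \<noteq> {}"
  proof
    assume "W = {}"
    then have "t ` G \<subseteq> - S" by (auto simp: W_def)
    then have "finite (t ` G)" using cofinite by (rule finite_subset)
    then show False using finite_imp_not_open \<open>open (t ` G)\<close> G(2) by blast
  qed
  moreover have "schwarzian_form (rat_fun qa qb) (rat_fun p q) w = rat_fun qa' qb' w" if "w \<in> W" for w
    using that schwarzian_form_rat_fun_eq_Q_value_at[OF QG QG' G(1,3,4) rel] by (auto simp: W_def S_def)
  moreover have "schwarzian_form (rat_fun qa qb) (rat_fun p q) holomorphic_on S"
    by (rule schwarzian_form_holomorphic[OF S(1) holomorphic_on_subset[OF rat_fun_holomorphic]])
      (auto simp: S_def)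
  moreover have "rat_fun qa' qb' holomorphic_on S"
    by (rule holomorphic_on_subset[OF rat_fun_holomorphic]) (auto simp: S_def)
  moreover have "z \<in> S" using z by (simp add: S_def)
  ultimately show ?thesis using analytic_continuation_open[OF W(1) S(1) _ S(2) W(2)] by blast
qed

theorem theorem5:
  fixes h t :: "complex \<Rightarrow> complex"
    and qa qb qa' qb' :: "complex poly"   \<comment> \<open>Q_Gamma = qa/qb, Q_Gamma' = qa'/qb'\<close>
    and p1 q1 p2 q2 :: "complex poly"     \<comment> \<open>h_1 = p1/q1, h_2 = p2/q2\<close>
    and n :: nat
  assumes h_haupt: "nonconst_meromorphic_H h"
    and t_haupt: "nonconst_meromorphic_H t"
    and QG: "is_Q_value h qa qb"
    and QG': "is_Q_value t qa' qb'"
    and n_pos: "n > 0"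
    and q1: "q1 \<noteq> 0" and q2: "q2 \<noteq> 0"
    and h1: "\<forall>\<tau>\<in>upper_half. h analytic_on {\<tau>} \<and> t analytic_on {\<tau>} \<and> poly q1 (t \<tau>) \<noteq> 0
               \<longrightarrow> h \<tau> = rat_fun p1 q1 (t \<tau>)"
    and h2: "\<forall>\<tau>\<in>upper_half. h analytic_on {of_nat n * \<tau>} \<and> t analytic_on {\<tau>} \<and> poly q2 (t \<tau>) \<noteq> 0
               \<longrightarrow> h (of_nat n * \<tau>) = rat_fun p2 q2 (t \<tau>)"
  shows "\<forall>z. poly q1 z \<noteq> 0 \<and> poly q2 z \<noteq> 0
            \<and> deriv (rat_fun p1 q1) z \<noteq> 0 \<and> deriv (rat_fun p2 q2) z \<noteq> 0
            \<and> poly qb (rat_fun p1 q1 z) \<noteq> 0 \<and> poly qb (rat_fun p2 q2 z) \<noteq> 0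
            \<and> poly qb' z \<noteq> 0 \<longrightarrow>
          (deriv (rat_fun p1 q1) z)^2 * rat_fun qa qb (rat_fun p1 q1 z)
              + schwarzian (rat_fun p1 q1) z / 2
            = (deriv (rat_fun p2 q2) z)^2 * rat_fun qa qb (rat_fun p2 q2 z)
              + schwarzian (rat_fun p2 q2) z / 2
          \<and> (deriv (rat_fun p2 q2) z)^2 * rat_fun qa qb (rat_fun p2 q2 z)
              + schwarzian (rat_fun p2 q2) z / 2
            = rat_fun qa' qb' z"
proof -
  define h_n where "h_n = (\<lambda>w. h (of_nat n * w))"
  have h_mero: "h meromorphic_on upper_half"
    using h_haupt by (simp add: nonconst_meromorphic_H_def)
  have h_n_mero: "h_n meromorphic_on upper_half" unfolding h_n_def
    by (rule meromorphic_on_compose[OF h_mero]) (auto intro: analytic_intros simp: upper_half_def n_pos)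
  have h_n_Q: "is_Q_value h_n qa qb" unfolding h_n_def by (rule Q_value_dilate[OF QG n_pos])
  have h_n_rel: "\<forall>\<tau>\<in>upper_half. h_n analytic_on {\<tau>} \<and> t analytic_on {\<tau>} \<and> poly q2 (t \<tau>) \<noteq> 0
               \<longrightarrow> h_n \<tau> = rat_fun p2 q2 (t \<tau>)"
    using h2 analytic_at_dilate_iff[of "of_nat n" h] n_pos by (simp add: h_n_def)
  have "schwarzian_form (rat_fun qa qb) (rat_fun p1 q1) z = rat_fun qa' qb' z"
    if "poly q1 z \<noteq> 0" "deriv (rat_fun p1 q1) z \<noteq> 0" "poly qb (rat_fun p1 q1 z) \<noteq> 0" "poly qb' z \<noteq> 0"
    for z
    using schwarzian_form_rat_fun_eq_Q_value[OF t_haupt h_mero QG QG' q1 h1 that] .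
  moreover have "schwarzian_form (rat_fun qa qb) (rat_fun p2 q2) z = rat_fun qa' qb' z"
    if "poly q2 z \<noteq> 0" "deriv (rat_fun p2 q2) z \<noteq> 0" "poly qb (rat_fun p2 q2 z) \<noteq> 0" "poly qb' z \<noteq> 0"
    for z
    using schwarzian_form_rat_fun_eq_Q_value[OF t_haupt h_n_mero h_n_Q QG' q2 h_n_rel that] .
  ultimately show ?thesis by (simp add: schwarzian_form_def)
qed

end
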